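(* Let $\mathbb{M}$ be a weight sequence with sequence of quotients $\mathbf{m}$. Then (i) $\alpha(\nu_{\mathbf{m}})\ge\alpha(\omega_{\mathbb{M}})$, and (ii) $\beta(\nu_{\mathbf{m}})=\beta(\omega_{\mathbb{M}})$.
   Context: A weight sequence is $\mathbb{M}=(M_p)_{p\in\mathbb{N}_0}$ of positive reals with $M_0=1$, $M_p^2\le M_{p-1}M_{p+1}$ ($p\ge1$) and $M_p^{1/p}\to\infty$; $m_p=M_{p+1}/M_p$. $\omega_{\mathbb{M}}(t):=\sup_{p\in\mathbb{N}_0}\log(t^p/M_p)$ for $t>0$, $\omega_{\mathbb{M}}(0)=0$; $\nu_{\mathbf{m}}(t):=\#\{j\in\mathbb{N}_0:m_j\le t\}$ for $t>0$. For a positive measurable $f$ on $[A,\infty)$: $\alpha(f):=\inf\{\alpha:\exists C_\alpha>0\ \forall\Lambda>1,\ \limsup_{x\to\infty}\sup_{\lambda\in[1,\Lambda]}\frac{f(\lambda x)}{\lambda^{\alpha}f(x)}\le C_\alpha\}$ and $\beta(f):=\sup\{\beta:\exists D_\beta>0\ \forall\Lambda>1,\ \liminf_{x\to\infty}\inf_{\lambda\in[1,\Lambda]}\frac{f(\lambda x)}{\lambda^{\beta}f(x)}\ge D_\beta\}$ (with $\inf\emptyset=\infty$); for $\omega_{\mathbb{M}}$ and $\nu_{\mathbf{m}}$ these are computed on any interval $[A,\infty)$, $A>0$, where the function is positive. *)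

theory Defs
  imports "HOL-Analysis.Analysis"
begin

definition weight_sequence :: "(nat \<Rightarrow> real) \<Rightarrow> bool" where
  "weight_sequence M \<longleftrightarrow>
     (\<forall>p. M p > 0) \<and> M 0 = 1 \<and>
     (\<forall>p\<ge>1. (M p)^2 \<le> M (p - 1) * M (p + 1)) \<and>
     filterlim (\<lambda>p. root p (M p)) at_top sequentially"

definition quotients :: "(nat \<Rightarrow> real) \<Rightarrow> nat \<Rightarrow> real" where
  "quotients M p = M (p + 1) / M p"

definition omega_M :: "(nat \<Rightarrow> real) \<Rightarrow> real \<Rightarrow> real" where
  "omega_M M t = (if t \<le> 0 then 0 else (SUP p::nat. ln (t ^ p / M p)))"

definition nu_m :: "(nat \<Rightarrow> real) \<Rightarrow> real \<Rightarrow> real" where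
  "nu_m m t = real (card {j::nat. m j \<le> t})"

definition alpha_index :: "(real \<Rightarrow> real) \<Rightarrow> ereal" where
  "alpha_index f = Inf {ereal a | a. \<exists>C>0. \<forall>\<Lambda>>1.
      Limsup at_top (\<lambda>x. SUP l\<in>{1..\<Lambda>}. ereal (f (l * x) / (l powr a * f x))) \<le> ereal C}"

definition beta_index :: "(real \<Rightarrow> real) \<Rightarrow> ereal" where
  "beta_index f = Sup {ereal b | b. \<exists>D>0. \<forall>\<Lambda>>1.
      Liminf at_top (\<lambda>x. INF l\<in>{1..\<Lambda>}. ereal (f (l * x) / (l powr b * f x))) \<ge> ereal D}"

end

theory Submission
  imports Defs
begin

text \<open>
  Since \<open>M\<^sub>p = m\<^sub>0 \<cdots> m\<^sub>p\<^sub>-\<^sub>1\<close> with \<open>m\<close> nondecreasing, the supremum defining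
  \<open>\<omega>(t)\<close> is attained at \<open>p = \<nu>(t)\<close>, so \<open>\<omega>(t)\<close> is the sum of \<open>log (t / m\<^sub>j)\<close> over \<open>m\<^sub>j \<le> t\<close> and
  \<open>\<omega>(b) - \<omega>(a) = \<integral>\<^sub>a\<^sup>b \<nu>(u) / u du\<close>. Integrating \<open>\<nu>(\<lambda>u) \<le> C \<lambda>\<^sup>\<alpha> \<nu>(u)\<close>
  (or \<open>\<nu>(\<lambda>u) \<ge> D \<lambda>\<^sup>\<beta> \<nu>(u)\<close>) from a fixed point up to \<open>x\<close> gives the same
  inequality for \<open>\<omega>\<close> up to an error that is negligible because \<open>\<omega>(x) \<rightarrow> \<infinity>\<close>;
  hence every exponent admissible for \<open>\<nu>\<close> is admissible for \<open>\<omega>\<close>.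
  Conversely, for \<open>\<beta> > 0\<close> a bound \<open>\<omega>(\<lambda>x) \<ge> D \<lambda>\<^sup>\<beta> \<omega>(x)\<close> forces \<open>\<omega>\<close> to at
  least double on every interval \<open>[t, r t]\<close> for a fixed large \<open>r\<close>, and
  \<open>\<nu>(t) log r \<le> \<omega>(r t) - \<omega>(t) \<le> \<nu>(r t) log r\<close> turns this into the corresponding
  lower bound for \<open>\<nu>\<close>; for \<open>\<beta> \<le> 0\<close> monotonicity of \<open>\<nu>\<close> suffices.
\<close>

section \<open>Admissible exponents for the indices \<open>\<alpha>\<close> and \<open>\<beta>\<close>\<close>

definition upper_exponent :: "(real \<Rightarrow> real) \<Rightarrow> real \<Rightarrow> bool" where
  "upper_exponent f a \<longleftrightarrow>
     (\<exists>C>0. \<forall>\<Lambda>>1. \<forall>\<^sub>F x in at_top. \<forall>l\<in>{1..\<Lambda>}. f (l * x) \<le> C * l powr a * f x)"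

definition lower_exponent :: "(real \<Rightarrow> real) \<Rightarrow> real \<Rightarrow> bool" where
  "lower_exponent f b \<longleftrightarrow>
     (\<exists>D>0. \<forall>\<Lambda>>1. \<forall>\<^sub>F x in at_top. \<forall>l\<in>{1..\<Lambda>}. D * l powr b * f x \<le> f (l * x))"

lemma eventually_le_of_Limsup_ratio_less:
  assumes f_pos: "\<forall>\<^sub>F x in at_top. 0 < f x"
    and "Limsup at_top (\<lambda>x. SUP l\<in>{1..\<Lambda>}. ereal (f (l * x) / (l powr a * f x))) < ereal C"
      (is "Limsup at_top ?ratio < _")
  shows "\<forall>\<^sub>F x in at_top. \<forall>l\<in>{1..\<Lambda>}. f (l * x) \<le> C * l powr a * f x"
  using f_pos Limsup_lessD[OF assms(2)]
proof eventually_elim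
  case (elim x)
  show ?case
  proof
    fix l assume l: "l \<in> {1..\<Lambda>}"
    have "ereal (f (l * x) / (l powr a * f x)) \<le> ?ratio x"
      by (rule SUP_upper[OF l])
    also have "\<dots> < ereal C"
      by (rule elim(2))
    finally show "f (l * x) \<le> C * l powr a * f x"
      using l elim(1) by (simp add: pos_divide_less_eq mult.assoc)
  qed
qed

lemma Limsup_ratio_le_of_eventually_le:
  assumes f_pos: "\<forall>\<^sub>F x in at_top. 0 < f x"
    and "\<forall>\<^sub>F x in at_top. \<forall>l\<in>{1..\<Lambda>}. f (l * x) \<le> C * l powr a * f x"
  shows "Limsup at_top (\<lambda>x. SUP l\<in>{1..\<Lambda>}. ereal (f (l * x) / (l powr a * f x))) \<le> ereal C"
proof (rule Limsup_bounded)
  show "\<forall>\<^sub>F x in at_top. (SUP l\<in>{1..\<Lambda>}. ereal (f (l * x) / (l powr a * f x))) \<le> ereal C"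
    using assms
  proof eventually_elim
    case (elim x)
    show ?case
    proof (rule SUP_least)
      fix l assume "l \<in> {1..\<Lambda>}"
      then show "ereal (f (l * x) / (l powr a * f x)) \<le> ereal C"
        using elim by (simp add: pos_divide_le_eq mult.assoc)
    qed
  qed
qed

lemma eventually_ge_of_Liminf_ratio_greater:
  assumes f_pos: "\<forall>\<^sub>F x in at_top. 0 < f x"
    and "ereal D < Liminf at_top (\<lambda>x. INF l\<in>{1..\<Lambda>}. ereal (f (l * x) / (l powr b * f x)))"
      (is "_ < Liminf at_top ?ratio")
  shows "\<forall>\<^sub>F x in at_top. \<forall>l\<in>{1..\<Lambda>}. D * l powr b * f x \<le> f (l * x)"
  using f_pos less_LiminfD[OF assms(2)]
proof eventually_elim
  case (elim x)
  show ?case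
  proof
    fix l assume l: "l \<in> {1..\<Lambda>}"
    have "ereal D < ?ratio x"
      by (rule elim(2))
    also have "\<dots> \<le> ereal (f (l * x) / (l powr b * f x))"
      by (rule INF_lower[OF l])
    finally show "D * l powr b * f x \<le> f (l * x)"
      using l elim(1) by (simp add: pos_less_divide_eq mult.assoc)
  qed
qed

lemma Liminf_ratio_ge_of_eventually_ge:
  assumes f_pos: "\<forall>\<^sub>F x in at_top. 0 < f x"
    and "\<forall>\<^sub>F x in at_top. \<forall>l\<in>{1..\<Lambda>}. D * l powr b * f x \<le> f (l * x)"
  shows "ereal D \<le> Liminf at_top (\<lambda>x. INF l\<in>{1..\<Lambda>}. ereal (f (l * x) / (l powr b * f x)))"
proof (rule Liminf_bounded)
  show "\<forall>\<^sub>F x in at_top. ereal D \<le> (INF l\<in>{1..\<Lambda>}. ereal (f (l * x) / (l powr b * f x)))"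
    using assms
  proof eventually_elim
    case (elim x)
    show ?case
    proof (rule INF_greatest)
      fix l assume "l \<in> {1..\<Lambda>}"
      then show "ereal D \<le> ereal (f (l * x) / (l powr b * f x))"
        using elim by (simp add: pos_le_divide_eq mult.assoc)
    qed
  qed
qed

lemma Limsup_ratio_bounded_iff_upper_exponent:
  assumes f_pos: "\<forall>\<^sub>F x in at_top. 0 < f x"
  shows "(\<exists>C>0. \<forall>\<Lambda>>1. Limsup at_top
            (\<lambda>x. SUP l\<in>{1..\<Lambda>}. ereal (f (l * x) / (l powr a * f x))) \<le> ereal C)
         \<longleftrightarrow> upper_exponent f a"
    (is "(\<exists>C>0. \<forall>\<Lambda>>1. ?Limsup \<Lambda> \<le> _) \<longleftrightarrow> _")
proof
  assume "\<exists>C>0. \<forall>\<Lambda>>1. ?Limsup \<Lambda> \<le> ereal C"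
  then obtain C where "C > 0" and C: "\<And>\<Lambda>. \<Lambda> > 1 \<Longrightarrow> ?Limsup \<Lambda> \<le> ereal C"
    by blast
  have "\<forall>\<^sub>F x in at_top. \<forall>l\<in>{1..\<Lambda>}. f (l * x) \<le> (C + 1) * l powr a * f x" if "\<Lambda> > 1" for \<Lambda>
    by (rule eventually_le_of_Limsup_ratio_less[OF f_pos order.strict_trans1[OF C[OF that]]]) simp
  moreover have "C + 1 > 0"
    using \<open>C > 0\<close> by simp
  ultimately show "upper_exponent f a"
    unfolding upper_exponent_def by blast
next
  assume "upper_exponent f a"
  then obtain C where "C > 0"
    and C: "\<And>\<Lambda>. \<Lambda> > 1 \<Longrightarrow> \<forall>\<^sub>F x in at_top. \<forall>l\<in>{1..\<Lambda>}. f (l * x) \<le> C * l powr a * f x"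
    unfolding upper_exponent_def by blast
  show "\<exists>C>0. \<forall>\<Lambda>>1. ?Limsup \<Lambda> \<le> ereal C"
  proof (intro exI[of _ C] conjI allI impI)
    fix \<Lambda> :: real assume "\<Lambda> > 1"
    then show "?Limsup \<Lambda> \<le> ereal C"
      by (rule Limsup_ratio_le_of_eventually_le[OF f_pos C])
  qed (rule \<open>C > 0\<close>)
qed

lemma Liminf_ratio_bounded_iff_lower_exponent:
  assumes f_pos: "\<forall>\<^sub>F x in at_top. 0 < f x"
  shows "(\<exists>D>0. \<forall>\<Lambda>>1. Liminf at_top
            (\<lambda>x. INF l\<in>{1..\<Lambda>}. ereal (f (l * x) / (l powr b * f x))) \<ge> ereal D)
         \<longleftrightarrow> lower_exponent f b"
    (is "(\<exists>D>0. \<forall>\<Lambda>>1. ?Liminf \<Lambda> \<ge> _) \<longleftrightarrow> _")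
proof
  assume "\<exists>D>0. \<forall>\<Lambda>>1. ?Liminf \<Lambda> \<ge> ereal D"
  then obtain D where "D > 0" and D: "\<And>\<Lambda>. \<Lambda> > 1 \<Longrightarrow> ?Liminf \<Lambda> \<ge> ereal D"
    by blast
  have "\<forall>\<^sub>F x in at_top. \<forall>l\<in>{1..\<Lambda>}. D / 2 * l powr b * f x \<le> f (l * x)" if "\<Lambda> > 1" for \<Lambda>
    by (rule eventually_ge_of_Liminf_ratio_greater[OF f_pos order.strict_trans2[OF _ D[OF that]]])
      (use \<open>D > 0\<close> in simp)
  moreover have "D / 2 > 0"
    using \<open>D > 0\<close> by simp
  ultimately show "lower_exponent f b"
    unfolding lower_exponent_def by blast
next
  assume "lower_exponent f b"
  then obtain D where "D > 0"
    and D: "\<And>\<Lambda>. \<Lambda> > 1 \<Longrightarrow> \<forall>\<^sub>F x in at_top. \<forall>l\<in>{1..\<Lambda>}. D * l powr b * f x \<le> f (l * x)"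
    unfolding lower_exponent_def by blast
  show "\<exists>D>0. \<forall>\<Lambda>>1. ?Liminf \<Lambda> \<ge> ereal D"
  proof (intro exI[of _ D] conjI allI impI)
    fix \<Lambda> :: real assume "\<Lambda> > 1"
    then show "?Liminf \<Lambda> \<ge> ereal D"
      by (rule Liminf_ratio_ge_of_eventually_ge[OF f_pos D])
  qed (rule \<open>D > 0\<close>)
qed

lemma alpha_index_eq_Inf_upper_exponent:
  assumes "\<forall>\<^sub>F x in at_top. 0 < f x"
  shows "alpha_index f = Inf {ereal a | a. upper_exponent f a}"
  unfolding alpha_index_def Limsup_ratio_bounded_iff_upper_exponent[OF assms] ..

lemma beta_index_eq_Sup_lower_exponent:
  assumes "\<forall>\<^sub>F x in at_top. 0 < f x"
  shows "beta_index f = Sup {ereal b | b. lower_exponent f b}"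
  unfolding beta_index_def Liminf_ratio_bounded_iff_lower_exponent[OF assms] ..

section \<open>A nondecreasing function and its logarithmic primitive\<close>

lemma has_integral_inverse_ln:
  fixes a b :: real
  assumes "0 < a" "a \<le> b"
  shows "((\<lambda>u. 1 / u) has_integral (ln b - ln a)) {a..b}"
proof (rule fundamental_theorem_of_calculus[OF \<open>a \<le> b\<close>])
  fix x assume "x \<in> {a..b}"
  then have "(ln has_real_derivative 1 / x) (at x)"
    using \<open>0 < a\<close> DERIV_ln[of x] by (simp add: divide_inverse)
  then show "(ln has_vector_derivative 1 / x) (at x within {a..b})"
    by (simp add: has_real_derivative_iff_has_vector_derivative has_vector_derivative_at_within)
qed

lemma min_one_powr_le:
  fixes l \<Lambda> a :: real
  assumes "1 \<le> l" "l \<le> \<Lambda>"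
  shows "min 1 (\<Lambda> powr a) \<le> l powr a"
proof (cases "0 \<le> a")
  case True
  then show ?thesis
    using assms ge_one_powr_ge_zero by (simp add: min.coboundedI1)
next
  case False
  then show ?thesis
    using assms by (simp add: min.coboundedI2 powr_mono2')
qed

lemma mono_lower_exponent_nonpos:
  assumes "mono f" and f_nonneg: "\<forall>\<^sub>F x in at_top. 0 \<le> f x" and "b \<le> 0"
  shows "lower_exponent f b"
  unfolding lower_exponent_def
proof (intro exI[of _ 1] conjI allI impI)
  fix \<Lambda> :: real
  show "\<forall>\<^sub>F x in at_top. \<forall>l\<in>{1..\<Lambda>}. 1 * l powr b * f x \<le> f (l * x)"
    using f_nonneg eventually_gt_at_top[of 0]
  proof eventually_elim
    case (elim x)
    show ?case
    proof
      fix l assume l: "l \<in> {1..\<Lambda>}"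
      have "l powr b \<le> 1"
        using l \<open>b \<le> 0\<close> powr_mono[of b 0 l] by simp
      then have "l powr b * f x \<le> f x"
        using elim(1) by (simp add: mult_left_le_one_le)
      also have "f x \<le> f (l * x)"
        using l elim(2) by (intro monoD[OF \<open>mono f\<close>]) simp
      finally show "1 * l powr b * f x \<le> f (l * x)"
        by simp
    qed
  qed
qed simp

locale logarithmic_primitive =
  fixes f F :: "real \<Rightarrow> real"
  assumes mono_f: "mono f"
    and f_nonneg: "0 \<le> f x"
    and eventually_f_pos: "\<forall>\<^sub>F x in at_top. 0 < f x"
    and has_integral_F: "0 < a \<Longrightarrow> a \<le> b \<Longrightarrow> ((\<lambda>u. f u / u) has_integral (F b - F a)) {a..b}"
begin

lemma has_integral_F_dilate:
  assumes "0 < l" "0 < a" "a \<le> b"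
  shows "((\<lambda>u. f (l * u) / u) has_integral (F (l * b) - F (l * a))) {a..b}"
proof -
  have "((\<lambda>u. f u / u) has_integral (F (l * b) - F (l * a))) {l * a..l * b}"
    using assms by (intro has_integral_F) auto
  from has_integral_stretch_real[OF this, of l]
  have "((\<lambda>u. f (l * u) / (l * u)) has_integral (F (l * b) - F (l * a)) / l) {a..b}"
    using assms by simp
  from has_integral_mult_right[OF this, of l] show ?thesis
    using assms by simp
qed

lemma F_mono:
  assumes "0 < s" "s \<le> t"
  shows "F s \<le> F t"
  using has_integral_nonneg[OF has_integral_F[OF assms]] assms f_nonneg by simp

lemma F_dilate_diff_le:
  assumes "0 < l" "0 < a" "a \<le> b" and f_le: "\<And>u. u \<in> {a..b} \<Longrightarrow> f (l * u) \<le> K * f u"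
  shows "F (l * b) - F (l * a) \<le> K * (F b - F a)"
proof (rule has_integral_le[OF has_integral_F_dilate[OF assms(1-3)]
      has_integral_mult_right[OF has_integral_F[OF assms(2,3)]]])
  fix u assume "u \<in> {a..b}"
  then show "f (l * u) / u \<le> K * (f u / u)"
    using f_le[of u] \<open>0 < a\<close> by (simp add: divide_right_mono)
qed

lemma F_dilate_diff_ge:
  assumes "0 < l" "0 < a" "a \<le> b" and f_ge: "\<And>u. u \<in> {a..b} \<Longrightarrow> K * f u \<le> f (l * u)"
  shows "K * (F b - F a) \<le> F (l * b) - F (l * a)"
proof (rule has_integral_le[OF has_integral_mult_right[OF has_integral_F[OF assms(2,3)]]
      has_integral_F_dilate[OF assms(1-3)]])
  fix u assume "u \<in> {a..b}"
  then show "K * (f u / u) \<le> f (l * u) / u"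
    using f_ge[of u] \<open>0 < a\<close> by (simp add: divide_right_mono)
qed

lemma F_increment_bounds:
  assumes "0 < t" "1 \<le> r"
  shows F_increment_ge: "f t * ln r \<le> F (r * t) - F t"
    and F_increment_le: "F (r * t) - F t \<le> f (r * t) * ln r"
proof -
  have t_le: "t \<le> r * t"
    using assms by simp
  have ln_eq: "ln (r * t) - ln t = ln r"
    using assms by (simp add: ln_mult)
  note F_int = has_integral_F[OF \<open>0 < t\<close> t_le]
  note ln_int = has_integral_mult_right[OF has_integral_inverse_ln[OF \<open>0 < t\<close> t_le], unfolded ln_eq]
  show "f t * ln r \<le> F (r * t) - F t"
  proof (rule has_integral_le[OF ln_int F_int])
    fix u assume "u \<in> {t..r * t}"
    then show "f t * (1 / u) \<le> f u / u"
      using \<open>0 < t\<close> monoD[OF mono_f, of t u] by (simp add: divide_right_mono)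
  qed
  show "F (r * t) - F t \<le> f (r * t) * ln r"
  proof (rule has_integral_le[OF F_int ln_int])
    fix u assume "u \<in> {t..r * t}"
    then show "f u / u \<le> f (r * t) * (1 / u)"
      using \<open>0 < t\<close> monoD[OF mono_f, of u "r * t"] by (simp add: divide_right_mono)
  qed
qed

lemma filterlim_F_at_top: "filterlim F at_top at_top"
proof -
  obtain t where t: "0 < t" "0 < f t"
    using eventually_happens[OF eventually_conj[OF eventually_gt_at_top[of 0] eventually_f_pos]]
    by auto
  have "filterlim (\<lambda>x. F t + f t * ln (x / t)) at_top at_top"
    using t by real_asymp
  moreover have "\<forall>\<^sub>F x in at_top. F t + f t * ln (x / t) \<le> F x"
    using eventually_ge_at_top[of t]
  proof eventually_elim
    case (elim x)
    then show ?case
      using F_increment_ge[OF \<open>0 < t\<close>, of "x / t"] t by simp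
  qed
  ultimately show ?thesis
    by (rule filterlim_at_top_mono)
qed

lemma eventually_F_ge: "\<forall>\<^sub>F x in at_top. c \<le> F x"
  using filterlim_F_at_top by (simp add: filterlim_at_top)

lemma F_dilate_le_of_f_dilate_le:
  assumes y0: "0 < y0" "0 \<le> F y0" "y0 \<le> x" and l: "l \<in> {1..\<Lambda>}" "0 \<le> C"
    and f_dilate: "\<And>u. y0 \<le> u \<Longrightarrow> f (l * u) \<le> C * l powr a * f u"
    and F_large: "F (\<Lambda> * y0) \<le> min 1 (\<Lambda> powr a) * F x"
  shows "F (l * x) \<le> (C + 1) * l powr a * F x"
proof -
  have "F (l * x) - F (l * y0) \<le> C * l powr a * (F x - F y0)"
    using l y0 f_dilate by (intro F_dilate_diff_le) auto
  also have "\<dots> \<le> C * l powr a * F x"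
    using \<open>0 \<le> C\<close> y0(2) by (simp add: mult_left_mono)
  finally have "F (l * x) \<le> F (l * y0) + C * l powr a * F x"
    by simp
  also have "F (l * y0) \<le> F (\<Lambda> * y0)"
    using l y0 by (intro F_mono) simp_all
  also have "\<dots> \<le> min 1 (\<Lambda> powr a) * F x"
    by (rule F_large)
  also have "\<dots> \<le> l powr a * F x"
    using l F_mono[OF y0(1,3)] y0(2) by (intro mult_right_mono min_one_powr_le) simp_all
  finally show ?thesis
    by (simp add: algebra_simps)
qed

lemma F_dilate_ge_of_f_dilate_ge:
  assumes y0: "0 < y0" "0 \<le> F y0" "y0 \<le> x" and "1 \<le> l" "0 \<le> D"
    and f_dilate: "\<And>u. y0 \<le> u \<Longrightarrow> D * l powr b * f u \<le> f (l * u)"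
    and F_large: "2 * F y0 \<le> F x"
  shows "D / 2 * l powr b * F x \<le> F (l * x)"
proof -
  have "D * l powr b * (F x / 2) \<le> D * l powr b * (F x - F y0)"
    using F_large \<open>0 \<le> D\<close> by (intro mult_left_mono) simp_all
  also have "\<dots> \<le> F (l * x) - F (l * y0)"
    using \<open>1 \<le> l\<close> y0 f_dilate by (intro F_dilate_diff_ge) auto
  also have "\<dots> \<le> F (l * x)"
    using F_mono[of y0 "l * y0"] \<open>1 \<le> l\<close> y0 by simp
  finally show ?thesis
    by simp
qed

lemma upper_exponent_F:
  assumes "upper_exponent f a"
  shows "upper_exponent F a"
proof -
  obtain C where "C > 0"
    and C: "\<And>\<Lambda>. \<Lambda> > 1 \<Longrightarrow> \<forall>\<^sub>F x in at_top. \<forall>l\<in>{1..\<Lambda>}. f (l * x) \<le> C * l powr a * f x"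
    using assms unfolding upper_exponent_def by blast
  have "\<forall>\<^sub>F x in at_top. \<forall>l\<in>{1..\<Lambda>}. F (l * x) \<le> (C + 1) * l powr a * F x" if "\<Lambda> > 1" for \<Lambda>
  proof -
    have "\<forall>\<^sub>F y in at_top. 0 < y \<and> 0 \<le> F y \<and> (\<forall>l\<in>{1..\<Lambda>}. f (l * y) \<le> C * l powr a * f y)"
      using eventually_gt_at_top eventually_F_ge C[OF that] by eventually_elim simp
    then obtain y0 where y0: "0 < y0" "0 \<le> F y0"
      and C_y0: "\<And>u l. y0 \<le> u \<Longrightarrow> l \<in> {1..\<Lambda>} \<Longrightarrow> f (l * u) \<le> C * l powr a * f u"
      unfolding eventually_at_top_linorder by blast
    have "min 1 (\<Lambda> powr a) > 0"
      using that by simp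
    show ?thesis
      using eventually_ge_at_top[of y0] eventually_F_ge[of "F (\<Lambda> * y0) / min 1 (\<Lambda> powr a)"]
    proof eventually_elim
      case (elim x)
      then have "F (\<Lambda> * y0) \<le> min 1 (\<Lambda> powr a) * F x"
        using \<open>min 1 (\<Lambda> powr a) > 0\<close> by (simp add: pos_divide_le_eq mult.commute)
      then show ?case
        using y0 elim(1) C_y0 \<open>C > 0\<close> by (intro ballI F_dilate_le_of_f_dilate_le) auto
    qed
  qed
  moreover have "C + 1 > 0"
    using \<open>C > 0\<close> by simp
  ultimately show ?thesis
    unfolding upper_exponent_def by blast
qed

lemma lower_exponent_F:
  assumes "lower_exponent f b"
  shows "lower_exponent F b"
proof -
  obtain D where "D > 0"
    and D: "\<And>\<Lambda>. \<Lambda> > 1 \<Longrightarrow> \<forall>\<^sub>F x in at_top. \<forall>l\<in>{1..\<Lambda>}. D * l powr b * f x \<le> f (l * x)"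
    using assms unfolding lower_exponent_def by blast
  have "\<forall>\<^sub>F x in at_top. \<forall>l\<in>{1..\<Lambda>}. D / 2 * l powr b * F x \<le> F (l * x)" if "\<Lambda> > 1" for \<Lambda>
  proof -
    have "\<forall>\<^sub>F y in at_top. 0 < y \<and> 0 \<le> F y \<and> (\<forall>l\<in>{1..\<Lambda>}. D * l powr b * f y \<le> f (l * y))"
      using eventually_gt_at_top eventually_F_ge D[OF that] by eventually_elim simp
    then obtain y0 where y0: "0 < y0" "0 \<le> F y0"
      and D_y0: "\<And>u l. y0 \<le> u \<Longrightarrow> l \<in> {1..\<Lambda>} \<Longrightarrow> D * l powr b * f u \<le> f (l * u)"
      unfolding eventually_at_top_linorder by blast
    show ?thesis
      using eventually_ge_at_top[of y0] eventually_F_ge[of "2 * F y0"]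
    proof eventually_elim
      case (elim x)
      then show ?case
        using y0 D_y0 \<open>D > 0\<close> by (intro ballI F_dilate_ge_of_f_dilate_ge) auto
    qed
  qed
  moreover have "D / 2 > 0"
    using \<open>D > 0\<close> by simp
  ultimately show ?thesis
    unfolding lower_exponent_def by blast
qed

lemma f_lower_bound_of_F_growth:
  assumes x: "0 < x" "0 \<le> F x" and "1 < r" "1 \<le> s" "0 \<le> c"
    and doubling: "2 * F (s * x) \<le> F (r * (s * x))"
    and growth: "c * F (r * x) \<le> F (s * (r * x))"
  shows "c * f x \<le> 2 * f (s * r * x)"
proof -
  have "0 < ln r"
    using \<open>1 < r\<close> by simp
  have "c * (f x * ln r) \<le> c * F (r * x)"
    using F_increment_ge[OF x(1), of r] x(2) \<open>1 < r\<close> \<open>0 \<le> c\<close> by (intro mult_left_mono) simp_all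
  also have "\<dots> \<le> F (r * (s * x))"
    using growth by (simp add: mult.left_commute)
  also have "\<dots> \<le> 2 * (f (s * r * x) * ln r)"
    using F_increment_le[of "s * x" r] doubling x(1) \<open>1 < r\<close> \<open>1 \<le> s\<close>
    by (simp add: mult.left_commute mult.commute)
  finally have "(c * f x) * ln r \<le> (2 * f (s * r * x)) * ln r"
    by (simp add: algebra_simps)
  then show ?thesis
    using \<open>0 < ln r\<close> by simp
qed

lemma f_dilate_ge_of_F_dilate_ge:
  assumes "1 < r" "0 < b" "0 < D" and doubling_factor: "2 \<le> D * r powr b"
    and x0: "0 < x0" "0 \<le> F x0"
    and F_dilate: "\<And>y l. x0 \<le> y \<Longrightarrow> l \<in> {1..L} \<Longrightarrow> D * l powr b * F y \<le> F (l * y)"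
    and "x0 \<le> x" "\<mu> \<in> {1..L}" "r \<le> L"
  shows "min 1 (D / 2) / r powr b * \<mu> powr b * f x \<le> f (\<mu> * x)"
proof -
  have F_nonneg: "0 \<le> F y" if "x0 \<le> y" for y
    using F_mono[OF x0(1) that] x0(2) by simp
  have "0 < x"
    using x0(1) \<open>x0 \<le> x\<close> by simp
  show ?thesis
  proof (cases "\<mu> \<le> r")
    case True
    have "min 1 (D / 2) / r powr b * \<mu> powr b \<le> 1 / r powr b * r powr b"
      using \<open>\<mu> \<in> {1..L}\<close> True \<open>0 < D\<close> \<open>0 < b\<close>
      by (intro mult_mono divide_right_mono powr_mono2) auto
    then have "min 1 (D / 2) / r powr b * \<mu> powr b * f x \<le> f x"
      using \<open>1 < r\<close> \<open>0 < D\<close> f_nonneg[of x] by (intro mult_left_le_one_le) simp_all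
    also have "f x \<le> f (\<mu> * x)"
      using \<open>\<mu> \<in> {1..L}\<close> \<open>0 < x\<close> by (intro monoD[OF mono_f]) simp
    finally show ?thesis .
  next
    case False
    define s where "s = \<mu> / r"
    have "s \<le> \<mu>"
      unfolding s_def using \<open>\<mu> \<in> {1..L}\<close> \<open>1 < r\<close> by (simp add: divide_le_eq mult_le_cancel_left1)
    then have s: "1 \<le> s" "s \<le> L" "\<mu> = s * r"
      using False \<open>\<mu> \<in> {1..L}\<close> \<open>1 < r\<close> unfolding s_def by auto
    have "x0 \<le> s * x" "x0 \<le> r * x"
      using \<open>x0 \<le> x\<close> \<open>0 < x\<close> s \<open>1 < r\<close>
      by (auto intro: order.trans[OF _ mult_le_cancel_right1[THEN iffD2]])
    have "2 * F (s * x) \<le> D * r powr b * F (s * x)"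
      using doubling_factor F_nonneg[OF \<open>x0 \<le> s * x\<close>] by (rule mult_right_mono)
    also have "\<dots> \<le> F (r * (s * x))"
      using F_dilate[OF \<open>x0 \<le> s * x\<close>, of r] \<open>1 < r\<close> \<open>r \<le> L\<close> by simp
    finally have "D * s powr b * f x \<le> 2 * f (s * r * x)"
      using s \<open>0 < x\<close> \<open>x0 \<le> x\<close> \<open>1 < r\<close> \<open>0 < D\<close> F_nonneg F_dilate[OF \<open>x0 \<le> r * x\<close>, of s]
      by (intro f_lower_bound_of_F_growth) auto
    moreover have "min 1 (D / 2) / r powr b * \<mu> powr b \<le> D / 2 * s powr b"
      unfolding s(3) using \<open>1 < r\<close> \<open>0 < D\<close> s by (simp add: powr_mult divide_right_mono)
    then have "min 1 (D / 2) / r powr b * \<mu> powr b * f x \<le> D / 2 * s powr b * f x"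
      using f_nonneg[of x] by (rule mult_right_mono)
    moreover have "f (\<mu> * x) = f (s * r * x)"
      using s(3) by simp
    ultimately show ?thesis
      by linarith
  qed
qed

lemma lower_exponent_f_pos:
  assumes "lower_exponent F b" "0 < b"
  shows "lower_exponent f b"
proof -
  obtain D where "D > 0"
    and D: "\<And>\<Lambda>. \<Lambda> > 1 \<Longrightarrow> \<forall>\<^sub>F x in at_top. \<forall>l\<in>{1..\<Lambda>}. D * l powr b * F x \<le> F (l * x)"
    using assms unfolding lower_exponent_def by blast
  define r where "r = max 2 ((2 / D) powr (1 / b))"
  have "1 < r"
    unfolding r_def by simp
  have "2 / D = ((2 / D) powr (1 / b)) powr b"
    using \<open>D > 0\<close> \<open>0 < b\<close> by (simp add: powr_powr)
  also have "\<dots> \<le> r powr b"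
    unfolding r_def using \<open>0 < b\<close> by (intro powr_mono2) auto
  finally have doubling_factor: "2 \<le> D * r powr b"
    using \<open>D > 0\<close> by (simp add: divide_le_eq mult.commute)
  have "\<forall>\<^sub>F x in at_top. \<forall>\<mu>\<in>{1..\<Lambda>}. min 1 (D / 2) / r powr b * \<mu> powr b * f x \<le> f (\<mu> * x)"
    if "\<Lambda> > 1" for \<Lambda>
  proof -
    define L where "L = max \<Lambda> r"
    have "L > 1"
      unfolding L_def using that by simp
    have "\<forall>\<^sub>F y in at_top. 0 < y \<and> 0 \<le> F y \<and> (\<forall>l\<in>{1..L}. D * l powr b * F y \<le> F (l * y))"
      using eventually_gt_at_top eventually_F_ge D[OF \<open>L > 1\<close>] by eventually_elim simp
    then obtain x0 where x0: "0 < x0" "0 \<le> F x0"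
      and D_x0: "\<And>y l. x0 \<le> y \<Longrightarrow> l \<in> {1..L} \<Longrightarrow> D * l powr b * F y \<le> F (l * y)"
      unfolding eventually_at_top_linorder by blast
    show ?thesis
      using eventually_ge_at_top[of x0]
    proof eventually_elim
      case (elim x)
      show ?case
        using \<open>1 < r\<close> \<open>0 < b\<close> \<open>D > 0\<close> doubling_factor x0 D_x0 elim
        by (intro ballI f_dilate_ge_of_F_dilate_ge) (auto simp: L_def)
    qed
  qed
  moreover have "min 1 (D / 2) / r powr b > 0"
    using \<open>D > 0\<close> \<open>1 < r\<close> by simp
  ultimately show ?thesis
    unfolding lower_exponent_def by blast
qed

lemma lower_exponent_f:
  assumes "lower_exponent F b"
  shows "lower_exponent f b"
proof (cases "0 < b")
  case True
  then show ?thesis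
    using assms by (rule lower_exponent_f_pos[rotated])
next
  case False
  then show ?thesis
    using mono_f f_nonneg by (intro mono_lower_exponent_nonpos) simp_all
qed

end

section \<open>Weight sequences\<close>

lemma mono_sublevel_eq_lessThan:
  fixes m :: "nat \<Rightarrow> 'a::linorder"
  assumes "mono m" "t < m n"
  shows "{j. m j \<le> t} = {..<LEAST j. t < m j}"
proof (intro set_eqI iffI)
  fix j assume "j \<in> {j. m j \<le> t}"
  moreover have "t < m (LEAST j. t < m j)"
    using assms(2) by (rule LeastI)
  ultimately show "j \<in> {..<LEAST j. t < m j}"
    using monoD[OF assms(1), of "LEAST j. t < m j" j] by (cases "(LEAST j. t < m j) \<le> j") auto
next
  fix j assume "j \<in> {..<LEAST j. t < m j}"
  then show "j \<in> {j. m j \<le> t}"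
    using not_less_Least[of j "\<lambda>j. t < m j"] by auto
qed

lemma SUP_partial_sums_eq_sum_max:
  fixes g :: "nat \<Rightarrow> real"
  assumes pos: "\<And>j. j < n \<Longrightarrow> 0 \<le> g j" and neg: "\<And>j. n \<le> j \<Longrightarrow> g j \<le> 0" and "n \<le> N"
  shows "(SUP p. \<Sum>j<p. g j) = (\<Sum>j<N. max 0 (g j))"
proof -
  have max_partial_sum: "(\<Sum>j<p. g j) \<le> (\<Sum>j<n. g j)" for p
  proof (cases "p \<le> n")
    case True
    then show ?thesis
      using pos by (intro sum_mono2) auto
  next
    case False
    then have "(\<Sum>j<p. g j) = (\<Sum>j<n. g j) + (\<Sum>j\<in>{n..<p}. g j)"
      using sum.atLeastLessThan_concat[of 0 n p g] by (simp add: atLeast0LessThan)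
    also have "(\<Sum>j\<in>{n..<p}. g j) \<le> 0"
      using neg by (intro sum_nonpos) simp
    finally show ?thesis
      by simp
  qed
  have "(SUP p. \<Sum>j<p. g j) = (\<Sum>j<n. g j)"
    using max_partial_sum by (intro cSup_eq_maximum) auto
  also have "\<dots> = (\<Sum>j<N. max 0 (g j))"
    using pos neg \<open>n \<le> N\<close> by (intro sum.mono_neutral_cong_left) auto
  finally show ?thesis .
qed

lemma has_integral_max_ln:
  fixes a b c :: real
  assumes "0 < c" "0 < a" "a \<le> b"
  shows "((\<lambda>u. if c \<le> u then 1 / u else 0) has_integral
            (max 0 (ln (b / c)) - max 0 (ln (a / c)))) {a..b}"
proof (rule fundamental_theorem_of_calculus_interior_strong[of "{c}"])
  show "continuous_on {a..b} (\<lambda>u. max 0 (ln (u / c)))"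
    using assms by (intro continuous_intros) auto
next
  fix x assume x: "x \<in> {a<..<b} - {c}"
  have "((\<lambda>u. max 0 (ln (u / c))) has_real_derivative (if c \<le> x then 1 / x else 0)) (at x)"
  proof (cases "c < x")
    case True
    have "((\<lambda>u. ln u - ln c) has_real_derivative 1 / x) (at x)"
      using x assms by (auto intro!: derivative_eq_intros)
    then have "((\<lambda>u. max 0 (ln (u / c))) has_real_derivative 1 / x) (at x)"
      by (rule has_field_derivative_transform_within_open[of _ _ _ "{c<..}"])
         (use True assms in \<open>auto simp: ln_div\<close>)
    then show ?thesis
      using True by simp
  next
    case False
    have "((\<lambda>u. 0) has_real_derivative 0) (at x)"
      by simp
    then have "((\<lambda>u. max 0 (ln (u / c))) has_real_derivative 0) (at x)"
      by (rule has_field_derivative_transform_within_open[of _ _ _ "{0<..<c}"])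
         (use False x assms in \<open>auto simp: ln_div\<close>)
    then show ?thesis
      using False x by simp
  qed
  then show "((\<lambda>u. max 0 (ln (u / c))) has_vector_derivative (if c \<le> x then 1 / x else 0)) (at x)"
    by (simp add: has_real_derivative_iff_has_vector_derivative)
qed (use assms in simp_all)

locale weight_seq =
  fixes M :: "nat \<Rightarrow> real"
  assumes M_weight_sequence: "weight_sequence M"
begin

lemma M_pos: "0 < M p"
  using M_weight_sequence unfolding weight_sequence_def by blast

lemma quotients_pos: "0 < quotients M p"
  using M_pos unfolding quotients_def by simp

lemma mono_quotients: "mono (quotients M)"
  unfolding mono_iff_le_Suc
proof
  fix p
  have "(M (Suc p))\<^sup>2 \<le> M p * M (Suc (Suc p))"
    using M_weight_sequence unfolding weight_sequence_def by (metis Suc_eq_plus1 diff_Suc_1 le_add2)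
  then show "quotients M p \<le> quotients M (Suc p)"
    using M_pos[of p] M_pos[of "Suc p"] unfolding quotients_def
    by (simp add: divide_le_eq le_divide_eq power2_eq_square mult.commute)
qed

lemma M_eq_prod_quotients: "M p = (\<Prod>j<p. quotients M j)"
proof (induction p)
  case 0
  then show ?case
    using M_weight_sequence unfolding weight_sequence_def by simp
next
  case (Suc p)
  have "M (Suc p) = quotients M p * M p"
    using M_pos[of p] by (simp add: quotients_def)
  then show ?case
    using Suc.IH by (simp add: mult.commute)
qed

lemma quotients_unbounded: "\<exists>j. t < quotients M j"
proof (rule ccontr)
  assume "\<not> (\<exists>j. t < quotients M j)"
  then have bounded: "quotients M j \<le> t" for j
    by (meson not_le)
  have "filterlim (\<lambda>p. root p (M p)) at_top sequentially"
    using M_weight_sequence unfolding weight_sequence_def by blast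
  then have "\<forall>\<^sub>F p in sequentially. t < root p (M p) \<and> 0 < p"
    by (intro eventually_conj eventually_gt_at_top) (simp add: filterlim_at_top_dense)
  then obtain p where "t < root p (M p)" "0 < p"
    by (auto dest: eventually_happens)
  have "0 \<le> t"
    using quotients_pos[of 0] bounded[of 0] by simp
  have "M p = (\<Prod>j<p. quotients M j)"
    by (rule M_eq_prod_quotients)
  also have "\<dots> \<le> (\<Prod>j<p. t)"
    using bounded quotients_pos by (intro prod_mono) (simp add: less_imp_le)
  finally have "root p (M p) \<le> root p (t ^ p)"
    using \<open>0 < p\<close> by simp
  also have "\<dots> = t"
    using \<open>0 < p\<close> \<open>0 \<le> t\<close> by (rule real_root_power_cancel)
  finally have "root p (M p) \<le> t" .
  with \<open>t < root p (M p)\<close> show False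
    by simp
qed

lemma quotients_sublevel_eq_lessThan: "\<exists>k. {j. quotients M j \<le> t} = {..<k}"
proof -
  obtain n where "t < quotients M n"
    using quotients_unbounded by blast
  from mono_sublevel_eq_lessThan[OF mono_quotients this] show ?thesis
    by (rule exI)
qed

lemma ln_div_M_eq_sum:
  assumes "0 < t"
  shows "ln (t ^ p / M p) = (\<Sum>j<p. ln (t / quotients M j))"
proof -
  have "t ^ p / M p = (\<Prod>j<p. t / quotients M j)"
    by (simp add: M_eq_prod_quotients prod_dividef)
  then show ?thesis
    using assms quotients_pos by (simp add: ln_prod less_imp_neq[symmetric])
qed

lemma omega_M_eq_sum:
  assumes "0 < t" "t < quotients M N"
  shows "omega_M M t = (\<Sum>j<N. max 0 (ln (t / quotients M j)))"
proof -
  obtain n where n: "{j. quotients M j \<le> t} = {..<n}"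
    using quotients_sublevel_eq_lessThan by blast
  then have le_iff: "quotients M j \<le> t \<longleftrightarrow> j < n" for j
    by blast
  have "n \<le> N"
    using le_iff[of N] assms(2) by simp
  have "omega_M M t = (SUP p. \<Sum>j<p. ln (t / quotients M j))"
    unfolding omega_M_def using assms(1) by (simp add: ln_div_M_eq_sum)
  also have "\<dots> = (\<Sum>j<N. max 0 (ln (t / quotients M j)))"
  proof (rule SUP_partial_sums_eq_sum_max[OF _ _ \<open>n \<le> N\<close>])
    fix j
    show "j < n \<Longrightarrow> 0 \<le> ln (t / quotients M j)"
      using le_iff[of j] assms(1) quotients_pos[of j] by simp
    show "n \<le> j \<Longrightarrow> ln (t / quotients M j) \<le> 0"
      using le_iff[of j] assms(1) quotients_pos[of j] by simp
  qed
  finally show ?thesis .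
qed

lemma finite_quotients_sublevel: "finite {j. quotients M j \<le> t}"
  using quotients_sublevel_eq_lessThan[of t] by (metis finite_lessThan)

lemma mono_nu_m: "mono (nu_m (quotients M))"
proof (rule monoI)
  fix s t :: real assume "s \<le> t"
  then have "{j. quotients M j \<le> s} \<subseteq> {j. quotients M j \<le> t}"
    by auto
  then show "nu_m (quotients M) s \<le> nu_m (quotients M) t"
    unfolding nu_m_def using finite_quotients_sublevel by (simp add: card_mono)
qed

lemma eventually_nu_m_pos: "\<forall>\<^sub>F x in at_top. 0 < nu_m (quotients M) x"
  using eventually_ge_at_top[of "quotients M 0"]
proof eventually_elim
  case (elim x)
  then have "0 \<in> {j. quotients M j \<le> x}"
    by simp
  then show ?case
    unfolding nu_m_def using finite_quotients_sublevel[of x] card_gt_0_iff by fastforce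
qed

lemma nu_m_div_eq_sum:
  assumes "u \<le> b" "b < quotients M N"
  shows "nu_m (quotients M) u / u = (\<Sum>j<N. if quotients M j \<le> u then 1 / u else 0)"
proof -
  have "j < N" if "quotients M j \<le> u" for j
  proof (rule ccontr)
    assume "\<not> j < N"
    then have "quotients M N \<le> quotients M j"
      by (intro monoD[OF mono_quotients]) simp
    with that assms show False
      by simp
  qed
  then have "{j. quotients M j \<le> u} = {j \<in> {..<N}. quotients M j \<le> u}"
    by auto
  then show ?thesis
    unfolding nu_m_def by (simp add: sum.inter_filter[symmetric])
qed

lemma omega_M_has_integral:
  assumes "0 < a" "a \<le> b"
  shows "((\<lambda>u. nu_m (quotients M) u / u) has_integral (omega_M M b - omega_M M a)) {a..b}"
proof -
  obtain N where N: "b < quotients M N"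
    using quotients_unbounded by blast
  have "((\<lambda>u. \<Sum>j<N. if quotients M j \<le> u then 1 / u else 0) has_integral
          (\<Sum>j<N. max 0 (ln (b / quotients M j)) - max 0 (ln (a / quotients M j)))) {a..b}"
    using assms quotients_pos by (intro has_integral_sum has_integral_max_ln) auto
  also have "(\<Sum>j<N. max 0 (ln (b / quotients M j)) - max 0 (ln (a / quotients M j)))
      = omega_M M b - omega_M M a"
    using assms N omega_M_eq_sum[of a N] omega_M_eq_sum[of b N] by (simp add: sum_subtractf)
  finally show ?thesis
  proof (rule has_integral_eq[rotated])
    fix u assume "u \<in> {a..b}"
    then show "(\<Sum>j<N. if quotients M j \<le> u then 1 / u else 0) = nu_m (quotients M) u / u"
      using nu_m_div_eq_sum[of u b N] N by simp
  qed
qed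

sublocale logarithmic_primitive "nu_m (quotients M)" "omega_M M"
proof
  show "0 \<le> nu_m (quotients M) x" for x
    unfolding nu_m_def by simp
  show "mono (nu_m (quotients M))"
    by (rule mono_nu_m)
  show "\<forall>\<^sub>F x in at_top. 0 < nu_m (quotients M) x"
    by (rule eventually_nu_m_pos)
  show "((\<lambda>u. nu_m (quotients M) u / u) has_integral (omega_M M b - omega_M M a)) {a..b}"
    if "0 < a" "a \<le> b" for a b
    using that by (rule omega_M_has_integral)
qed

end

theorem theorem4p4:
  fixes M :: "nat \<Rightarrow> real"
  assumes "weight_sequence M"
  shows "alpha_index (nu_m (quotients M)) \<ge> alpha_index (omega_M M)
    \<and> beta_index (nu_m (quotients M)) = beta_index (omega_M M)"
proof -
  interpret weight_seq M
    using assms by unfold_locales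
  have omega_pos: "\<forall>\<^sub>F x in at_top. 0 < omega_M M x"
    using eventually_F_ge[of 1] by eventually_elim simp
  have lower_exponent_iff: "lower_exponent (nu_m (quotients M)) b \<longleftrightarrow> lower_exponent (omega_M M) b"
    for b
    using lower_exponent_F lower_exponent_f by blast
  have "alpha_index (omega_M M) \<le> alpha_index (nu_m (quotients M))"
    unfolding alpha_index_eq_Inf_upper_exponent[OF eventually_nu_m_pos]
      alpha_index_eq_Inf_upper_exponent[OF omega_pos]
    by (rule Inf_superset_mono) (auto intro: upper_exponent_F)
  moreover have "beta_index (nu_m (quotients M)) = beta_index (omega_M M)"
    unfolding beta_index_eq_Sup_lower_exponent[OF eventually_nu_m_pos]
      beta_index_eq_Sup_lower_exponent[OF omega_pos] lower_exponent_iff ..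
  ultimately show ?thesis
    by simp
qed

end
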